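(* Let $n$ range over odd square-free integers greater than $1$, let $r$ be real, and let $V$ be drawn uniformly at random from $\mathcal{V}_n$. Then, as $n\to\infty$, \[ \Pr\Big(\|V_r\|_4^4<288\,[\psi(n)]^2\log n\Big)\to 1, \] where $\psi(n)=n-\phi(n)$.
   Context: $\phi$ is Euler's totient function. For $A\in\mathbb{C}[z]$, $\|A\|_4=\left(\frac{1}{2\pi}\int_0^{2\pi}|A(e^{i\theta})|^4 d\theta\right)^{1/4}$. For a polynomial $A$ of degree at most $n-1$ and real $r$, the rotation is $A_r(z)=z^{-\lfloor nr\rfloor}A(z)\bmod (z^n-1)$. $\mathcal{V}_n$ is the set of polynomials $\sum_{j=0}^{n-1}v_jz^j$ with $v_j\in\{0,-1,+1\}$ and $v_j=0$ if and only if $\gcd(j,n)=1$. *)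

theory Defs
  imports "HOL-Analysis.Analysis" "HOL-Computational_Algebra.Polynomial"
    "HOL-Computational_Algebra.Squarefree" "HOL-Number_Theory.Totient"
begin

definition L4_pow4 :: "complex poly \<Rightarrow> real" where
  "L4_pow4 A = (1 / (2 * pi)) * integral {0..2*pi} (\<lambda>\<theta>. (cmod (poly A (cis \<theta>))) ^ 4)"

text \<open>Rotation A_r(z) = z^{-floor(n r)} A(z) mod (z^n - 1). Since z^n = 1 modulo z^n - 1,
  z^{-k} is represented by z^{(-k) mod n}.\<close>
definition rotation :: "nat \<Rightarrow> real \<Rightarrow> complex poly \<Rightarrow> complex poly" where
  "rotation n r A = (monom 1 (nat ((- \<lfloor>real n * r\<rfloor>) mod int n)) * A) mod (monom 1 n - 1)"

definition Vset :: "nat \<Rightarrow> complex poly set" where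
  "Vset n = {(\<Sum>j<n. monom (of_int (v j)) j) | v :: nat \<Rightarrow> int.
              \<forall>j<n. v j \<in> {0, -1, 1} \<and> (v j = 0 \<longleftrightarrow> coprime j n)}"

definition psi :: "nat \<Rightarrow> nat" where
  "psi n = n - totient n"

definition prob_V :: "nat \<Rightarrow> (complex poly \<Rightarrow> bool) \<Rightarrow> real" where
  "prob_V n P = real (card {V \<in> Vset n. P V}) / real (card (Vset n))"

end

theory Submission
  imports Defs
begin

text \<open>
  The coefficients of V on the psi(n) residues not coprime to n are independent random signs,
  and the rotation only permutes the monomials modulo z^n - 1. For every z on the unit circle,
  V_r(z) is therefore a Rademacher sum of psi(n) unit vectors, whose fourth moment is at most
  3 psi(n)^2. Integrating over z, the expected value of the fourth power of the L4 norm of V_r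
  is at most 3 psi(n)^2, and Markov's inequality bounds the probability of the complementary
  event by 1/(96 log n).
\<close>

definition sign_vectors :: "nat set \<Rightarrow> (nat \<Rightarrow> int) set" where
  "sign_vectors S = {v. (\<forall>j\<in>S. v j \<in> {-1, 1}) \<and> (\<forall>j. j \<notin> S \<longrightarrow> v j = 0)}"

lemma sign_vectors_empty: "sign_vectors {} = {\<lambda>_. 0}"
  by (auto simp: sign_vectors_def)

lemma sign_vectors_insert:
  assumes "a \<notin> S"
  shows "sign_vectors (insert a S) = (\<lambda>(b, v). v(a := b)) ` ({-1, 1} \<times> sign_vectors S)"
proof (intro equalityI subsetI)
  fix u assume u: "u \<in> sign_vectors (insert a S)"
  have "u = (\<lambda>(b, v). v(a := b)) (u a, u(a := 0))" by simp
  moreover have "(u a, u(a := 0)) \<in> {-1, 1} \<times> sign_vectors S"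
    using u assms unfolding sign_vectors_def by force
  ultimately show "u \<in> (\<lambda>(b, v). v(a := b)) ` ({-1, 1} \<times> sign_vectors S)" by blast
qed (force simp: sign_vectors_def)

lemma inj_on_sign_vectors_insert:
  assumes "a \<notin> S"
  shows "inj_on (\<lambda>(b, v). v(a := b)) ({-1, 1} \<times> sign_vectors S)"
proof (rule inj_onI, clarify)
  fix b v b' v'
  assume v: "v \<in> sign_vectors S" "v' \<in> sign_vectors S" and eq: "v(a := b) = v'(a := b')"
  have "v = v'"
  proof
    fix j show "v j = v' j"
      using fun_cong[OF eq, of j] v assms by (cases "j = a") (auto simp: sign_vectors_def)
  qed
  then show "b = b' \<and> v = v'" using fun_cong[OF eq, of a] by simp
qed

lemma finite_sign_vectors: "finite S \<Longrightarrow> finite (sign_vectors S)"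
  by (induction rule: finite_induct) (simp_all add: sign_vectors_empty sign_vectors_insert)

lemma card_sign_vectors: "finite S \<Longrightarrow> card (sign_vectors S) = 2 ^ card S"
proof (induction rule: finite_induct)
  case (insert a S)
  then show ?case
    by (simp add: sign_vectors_insert card_image inj_on_sign_vectors_insert
        card_cartesian_product)
qed (simp add: sign_vectors_empty)

lemma sum_sign_vectors_insert:
  assumes "a \<notin> S"
  shows "(\<Sum>u\<in>sign_vectors (insert a S). g u) = (\<Sum>v\<in>sign_vectors S. g (v(a := 1)) + g (v(a := -1)))"
proof -
  have "(\<Sum>u\<in>sign_vectors (insert a S). g u)
      = (\<Sum>(b, v)\<in>{-1, 1} \<times> sign_vectors S. g (v(a := b)))"
    unfolding sign_vectors_insert[OF assms]
    by (subst sum.reindex[OF inj_on_sign_vectors_insert[OF assms]]) (simp add: prod.case_distrib)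
  also have "\<dots> = (\<Sum>b\<in>{-1, 1::int}. \<Sum>v\<in>sign_vectors S. g (v(a := b)))"
    by (simp add: sum.cartesian_product)
  also have "\<dots> = (\<Sum>v\<in>sign_vectors S. g (v(a := 1)) + g (v(a := -1)))"
    by (simp add: sum.distrib add.commute)
  finally show ?thesis .
qed

lemma sum_sign_vectors_insert_sign_sum:
  fixes w :: "nat \<Rightarrow> 'a::real_vector"
  assumes "finite S" "a \<notin> S"
  shows "(\<Sum>u\<in>sign_vectors (insert a S). g (\<Sum>j\<in>insert a S. of_int (u j) *\<^sub>R w j))
       = (\<Sum>v\<in>sign_vectors S. g ((\<Sum>j\<in>S. of_int (v j) *\<^sub>R w j) + w a)
                                + g ((\<Sum>j\<in>S. of_int (v j) *\<^sub>R w j) - w a))"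
proof -
  have upd: "(\<Sum>j\<in>insert a S. of_int ((v(a := b)) j) *\<^sub>R w j)
          = (\<Sum>j\<in>S. of_int (v j) *\<^sub>R w j) + of_int b *\<^sub>R w a" for v and b :: int
  proof -
    have "(\<Sum>j\<in>S. of_int ((v(a := b)) j) *\<^sub>R w j) = (\<Sum>j\<in>S. of_int (v j) *\<^sub>R w j)"
      using assms(2) by (intro sum.cong) auto
    then show ?thesis using assms by (simp add: add.commute)
  qed
  have "(\<Sum>j\<in>insert a S. of_int ((v(a := 1)) j) *\<^sub>R w j) = (\<Sum>j\<in>S. of_int (v j) *\<^sub>R w j) + w a"
    and "(\<Sum>j\<in>insert a S. of_int ((v(a := -1)) j) *\<^sub>R w j) = (\<Sum>j\<in>S. of_int (v j) *\<^sub>R w j) - w a"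
    for v
    using upd[of v 1] upd[of v "-1"] by simp_all
  then show ?thesis by (simp only: sum_sign_vectors_insert[OF assms(2)])
qed

lemma norm_add_diff_pow2:
  fixes y w :: "'a::real_inner"
  shows "norm (y + w) ^ 2 + norm (y - w) ^ 2 = 2 * norm y ^ 2 + 2 * norm w ^ 2"
  by (simp add: power2_norm_eq_inner inner_add inner_diff inner_commute)

lemma norm_add_diff_pow4_le:
  fixes y w :: "'a::real_inner"
  assumes "norm w \<le> 1"
  shows "norm (y + w) ^ 4 + norm (y - w) ^ 4 \<le> 2 * norm y ^ 4 + 12 * norm y ^ 2 + 2"
proof -
  define A where "A = norm y ^ 2 + norm w ^ 2"
  define B where "B = 2 * inner y w"
  have "norm (y + w) ^ 2 = A + B" "norm (y - w) ^ 2 = A - B"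
    by (simp_all add: A_def B_def power2_norm_eq_inner inner_add inner_diff inner_commute)
  then have "norm (y + w) ^ 4 + norm (y - w) ^ 4 = (A + B) ^ 2 + (A - B) ^ 2"
    by (metis (no_types) power_mult num_double numeral_times_numeral)
  also have "\<dots> = 2 * A ^ 2 + 2 * B ^ 2"
    by (simp add: power2_eq_square algebra_simps)
  also have "\<dots> \<le> 2 * (norm y ^ 2 + 1) ^ 2 + 8 * norm y ^ 2"
  proof -
    have w2: "norm w ^ 2 \<le> 1" using assms by (simp add: power_le_one)
    have "A ^ 2 \<le> (norm y ^ 2 + 1) ^ 2" using w2 by (simp add: A_def power_mono)
    moreover have "B ^ 2 \<le> 4 * norm y ^ 2"
    proof -
      have "\<bar>inner y w\<bar> \<le> norm y"
        using Cauchy_Schwarz_ineq2[of y w] mult_left_le[OF assms norm_ge_zero[of y]] by linarith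
      then have "\<bar>inner y w\<bar> ^ 2 \<le> norm y ^ 2" by (rule power_mono) simp
      then show ?thesis by (simp add: B_def power_mult_distrib)
    qed
    ultimately show ?thesis by linarith
  qed
  also have "\<dots> = 2 * norm y ^ 4 + 12 * norm y ^ 2 + 2"
    by (simp add: power2_eq_square power4_eq_xxxx algebra_simps)
  finally show ?thesis .
qed

lemma sum_norm_sign_sum_pow2_le:
  fixes w :: "nat \<Rightarrow> 'a::real_inner"
  assumes "finite S" "\<And>j. norm (w j) \<le> 1"
  shows "(\<Sum>v\<in>sign_vectors S. norm (\<Sum>j\<in>S. of_int (v j) *\<^sub>R w j) ^ 2)
           \<le> real (card S) * real (card (sign_vectors S))"
  using assms(1)
proof (induction rule: finite_induct)
  case (insert a S)
  let ?Y = "\<lambda>v. \<Sum>j\<in>S. of_int (v j) *\<^sub>R w j"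
  have "(\<Sum>u\<in>sign_vectors (insert a S). norm (\<Sum>j\<in>insert a S. of_int (u j) *\<^sub>R w j) ^ 2)
      = (\<Sum>v\<in>sign_vectors S. norm (?Y v + w a) ^ 2 + norm (?Y v - w a) ^ 2)"
    by (rule sum_sign_vectors_insert_sign_sum[OF insert.hyps])
  also have "\<dots> = (\<Sum>v\<in>sign_vectors S. 2 * norm (?Y v) ^ 2 + 2 * norm (w a) ^ 2)"
    by (simp only: norm_add_diff_pow2)
  also have "\<dots> \<le> (\<Sum>v\<in>sign_vectors S. 2 * norm (?Y v) ^ 2 + 2)"
    using assms(2) by (intro sum_mono) (simp add: power_le_one)
  also have "\<dots> \<le> real (card (insert a S)) * real (card (sign_vectors (insert a S)))"
    using insert by (simp add: sum.distrib sum_distrib_left[symmetric] card_sign_vectors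
        algebra_simps)
  finally show ?case .
qed simp

lemma sum_norm_sign_sum_pow4_le:
  fixes w :: "nat \<Rightarrow> 'a::real_inner"
  assumes "finite S" "\<And>j. norm (w j) \<le> 1"
  shows "(\<Sum>v\<in>sign_vectors S. norm (\<Sum>j\<in>S. of_int (v j) *\<^sub>R w j) ^ 4)
           \<le> 3 * real (card S) ^ 2 * real (card (sign_vectors S))"
  using assms(1)
proof (induction rule: finite_induct)
  case (insert a S)
  let ?Y = "\<lambda>v. \<Sum>j\<in>S. of_int (v j) *\<^sub>R w j"
  define m where "m = real (card S)"
  define K where "K = real (card (sign_vectors S))"
  have "(\<Sum>u\<in>sign_vectors (insert a S). norm (\<Sum>j\<in>insert a S. of_int (u j) *\<^sub>R w j) ^ 4)
      = (\<Sum>v\<in>sign_vectors S. norm (?Y v + w a) ^ 4 + norm (?Y v - w a) ^ 4)"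
    by (rule sum_sign_vectors_insert_sign_sum[OF insert.hyps])
  also have "\<dots> \<le> (\<Sum>v\<in>sign_vectors S. 2 * norm (?Y v) ^ 4 + 12 * norm (?Y v) ^ 2 + 2)"
    using assms(2) by (intro sum_mono norm_add_diff_pow4_le)
  also have "\<dots> = 2 * (\<Sum>v\<in>sign_vectors S. norm (?Y v) ^ 4)
                  + 12 * (\<Sum>v\<in>sign_vectors S. norm (?Y v) ^ 2) + 2 * K"
    by (simp add: sum.distrib sum_distrib_left K_def)
  also have "\<dots> \<le> 2 * (3 * m ^ 2 * K) + 12 * (m * K) + 2 * K"
    using insert.IH sum_norm_sign_sum_pow2_le[of S w, OF insert.hyps(1) assms(2)]
    unfolding m_def K_def by linarith
  also have "\<dots> \<le> 3 * real (card (insert a S)) ^ 2 * real (card (sign_vectors (insert a S)))"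
    using insert.hyps by (simp add: m_def K_def card_sign_vectors power2_eq_square algebra_simps)
  finally show ?case .
qed simp

lemma card_le_sum_threshold:
  fixes f :: "'a \<Rightarrow> real"
  assumes "finite A" "\<And>x. x \<in> A \<Longrightarrow> 0 \<le> f x"
  shows "T * card {x \<in> A. T \<le> f x} \<le> sum f A"
proof -
  have "T * card {x \<in> A. T \<le> f x} = (\<Sum>x\<in>{x \<in> A. T \<le> f x}. T)" by simp
  also have "\<dots> \<le> (\<Sum>x\<in>{x \<in> A. T \<le> f x}. f x)" by (intro sum_mono) simp
  also have "\<dots> \<le> sum f A" using assms by (intro sum_mono2) auto
  finally show ?thesis .
qed

lemma degree_monom_minus_one: "n \<ge> 1 \<Longrightarrow> degree (monom (1::'a::field) n - 1) = n"
  using degree_add_eq_left[of "-1" "monom (1::'a) n"] by (simp add: degree_monom_eq)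

lemma monom_mod_monom_minus_one:
  fixes c :: "'a::field"
  assumes "n \<ge> 1"
  shows "monom c m mod (monom 1 n - 1) = monom c (m mod n)"
proof -
  let ?d = "monom (1::'a) n - 1"
  have small: "p mod ?d = p" if "degree p < n" for p
    using that assms by (intro mod_poly_less) (simp add: degree_monom_minus_one)
  have one: "1 mod ?d = 1" using small[of 1] assms by simp
  have "monom 1 n mod ?d = (?d + 1) mod ?d" by simp
  also have "\<dots> = 1" by (simp only: mod_add_self1 one)
  finally have xn: "monom 1 n mod ?d = 1" .
  have "monom 1 m = monom 1 n ^ (m div n) * monom (1::'a) (m mod n)"
    by (simp add: monom_power mult_monom)
  then have "monom 1 m mod ?d = ((monom 1 n mod ?d) ^ (m div n) mod ?d * monom 1 (m mod n)) mod ?d"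
    by (simp add: power_mod mod_mult_left_eq)
  also have "\<dots> = monom 1 (m mod n)"
    using assms by (simp add: xn one small degree_monom_eq)
  finally have "smult c (monom 1 m) mod ?d = smult c (monom 1 (m mod n))"
    by (simp add: mod_smult_left)
  then show ?thesis by (simp add: smult_monom)
qed

lemma sum_mod_poly: "(\<Sum>i\<in>A. f i) mod (d :: 'a::field poly) = (\<Sum>i\<in>A. f i mod d)"
  by (induction A rule: infinite_finite_induct) (simp_all add: poly_mod_add_left)

lemma poly_rotation_sum_monom:
  assumes "n \<ge> 1"
  shows "poly (rotation n r (\<Sum>j<n. monom (c j) j)) z
           = (\<Sum>j<n. c j * z ^ ((nat ((- \<lfloor>real n * r\<rfloor>) mod int n) + j) mod n))"
  unfolding rotation_def
  by (simp add: sum_distrib_left mult_monom sum_mod_poly monom_mod_monom_minus_one assms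
      poly_sum poly_monom)

definition noncoprime_residues :: "nat \<Rightarrow> nat set" where
  "noncoprime_residues n = {j. j < n \<and> \<not> coprime j n}"

definition poly_of_signs :: "nat \<Rightarrow> (nat \<Rightarrow> int) \<Rightarrow> complex poly" where
  "poly_of_signs n v = (\<Sum>j<n. monom (of_int (v j)) j)"

lemma finite_noncoprime_residues: "finite (noncoprime_residues n)"
  by (simp add: noncoprime_residues_def)

lemma card_noncoprime_residues:
  assumes "n > 1"
  shows "card (noncoprime_residues n) = psi n"
proof -
  have tot: "totatives n = {j. j < n \<and> coprime j n}"
    using assms by (auto simp: in_totatives_iff le_less intro!: Nat.gr0I)
  have "{..<n} = noncoprime_residues n \<union> totatives n"
    and "noncoprime_residues n \<inter> totatives n = {}"
    unfolding tot noncoprime_residues_def by auto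
  then have "n = card (noncoprime_residues n) + totient n"
    by (metis card_lessThan card_Un_disjoint finite_noncoprime_residues finite_totatives totient_def)
  then show ?thesis unfolding psi_def by simp
qed

lemma psi_ge_one:
  assumes "n > 1"
  shows "psi n \<ge> 1"
proof -
  have "0 \<in> noncoprime_residues n" using assms by (simp add: noncoprime_residues_def)
  then have "card (noncoprime_residues n) > 0"
    using finite_noncoprime_residues card_gt_0_iff by blast
  then show ?thesis using card_noncoprime_residues[OF assms] by simp
qed

lemma coeff_poly_of_signs: "coeff (poly_of_signs n v) i = (if i < n then of_int (v i) else 0)"
  unfolding poly_of_signs_def by (simp add: coeff_sum coeff_monom)

lemma Vset_eq_image: "Vset n = poly_of_signs n ` sign_vectors (noncoprime_residues n)"
proof (intro equalityI subsetI)
  fix V assume "V \<in> Vset n"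
  then obtain v where V: "V = (\<Sum>j<n. monom (of_int (v j)) j)"
    and v: "\<forall>j<n. v j \<in> {0, -1, 1} \<and> (v j = 0 \<longleftrightarrow> coprime j n)"
    unfolding Vset_def by blast
  define u where "u j = (if j < n then v j else 0)" for j
  have "u \<in> sign_vectors (noncoprime_residues n)"
    using v by (auto simp: sign_vectors_def noncoprime_residues_def u_def)
  moreover have "V = poly_of_signs n u" by (simp add: V poly_of_signs_def u_def)
  ultimately show "V \<in> poly_of_signs n ` sign_vectors (noncoprime_residues n)" by blast
next
  fix V assume "V \<in> poly_of_signs n ` sign_vectors (noncoprime_residues n)"
  then obtain v where v: "v \<in> sign_vectors (noncoprime_residues n)" and V: "V = poly_of_signs n v"
    by blast
  have "\<forall>j<n. v j \<in> {0, -1, 1} \<and> (v j = 0 \<longleftrightarrow> coprime j n)"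
    using v by (fastforce simp: sign_vectors_def noncoprime_residues_def)
  then show "V \<in> Vset n" unfolding Vset_def V poly_of_signs_def by blast
qed

lemma inj_on_poly_of_signs: "inj_on (poly_of_signs n) (sign_vectors (noncoprime_residues n))"
proof (rule inj_onI, rule ext)
  fix v u i
  assume "v \<in> sign_vectors (noncoprime_residues n)" "u \<in> sign_vectors (noncoprime_residues n)"
    and "poly_of_signs n v = poly_of_signs n u"
  then show "v i = u i"
    by (cases "i < n")
      (auto simp: coeff_poly_of_signs sign_vectors_def noncoprime_residues_def
        dest!: arg_cong[where f = "\<lambda>p. coeff p i"])
qed

lemma card_Vset: "n > 1 \<Longrightarrow> card (Vset n) = 2 ^ psi n"
  by (simp add: Vset_eq_image card_image inj_on_poly_of_signs card_sign_vectors
      finite_noncoprime_residues card_noncoprime_residues)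

lemma poly_rotation_poly_of_signs:
  assumes "n \<ge> 1" "v \<in> sign_vectors (noncoprime_residues n)"
  shows "poly (rotation n r (poly_of_signs n v)) z
     = (\<Sum>j\<in>noncoprime_residues n.
          of_int (v j) *\<^sub>R z ^ ((nat ((- \<lfloor>real n * r\<rfloor>) mod int n) + j) mod n))"
  (is "_ = (\<Sum>j\<in>_. of_int (v j) *\<^sub>R ?w j)")
proof -
  have "poly (rotation n r (poly_of_signs n v)) z = (\<Sum>j<n. of_int (v j) * ?w j)"
    unfolding poly_of_signs_def using assms(1) by (rule poly_rotation_sum_monom)
  also have "\<dots> = (\<Sum>j\<in>noncoprime_residues n. of_int (v j) * ?w j)"
    using assms(2) by (intro sum.mono_neutral_right)
      (auto simp: sign_vectors_def noncoprime_residues_def)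
  finally show ?thesis by (simp add: scaleR_conv_of_real)
qed

lemma integrable_L4_pow4: "(\<lambda>\<theta>. cmod (poly p (cis \<theta>)) ^ 4) integrable_on {0..2*pi}"
  by (intro integrable_continuous_interval continuous_intros)

lemma L4_pow4_nonneg: "L4_pow4 p \<ge> 0"
  unfolding L4_pow4_def by (intro mult_nonneg_nonneg integral_nonneg integrable_L4_pow4) auto

lemma sum_L4_pow4_rotation_le:
  assumes "n > 1"
  shows "(\<Sum>V\<in>Vset n. L4_pow4 (rotation n r V)) \<le> 3 * real (psi n) ^ 2 * card (Vset n)"
proof -
  define F where "F = sign_vectors (noncoprime_residues n)"
  define C where "C = 3 * real (psi n) ^ 2 * card F"
  have finF: "finite F" by (simp add: F_def finite_sign_vectors finite_noncoprime_residues)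
  have pointwise: "(\<Sum>v\<in>F. cmod (poly (rotation n r (poly_of_signs n v)) (cis \<theta>)) ^ 4) \<le> C"
    for \<theta>
    using sum_norm_sign_sum_pow4_le[OF finite_noncoprime_residues[of n],
        where w = "\<lambda>j. cis \<theta> ^ ((nat ((- \<lfloor>real n * r\<rfloor>) mod int n) + j) mod n)"] assms
    by (simp add: F_def C_def poly_rotation_poly_of_signs card_noncoprime_residues norm_power)
  have "(\<Sum>V\<in>Vset n. L4_pow4 (rotation n r V)) = (\<Sum>v\<in>F. L4_pow4 (rotation n r (poly_of_signs n v)))"
    by (simp add: Vset_eq_image F_def sum.reindex inj_on_poly_of_signs)
  also have "\<dots> = (1 / (2*pi)) * integral {0..2*pi}
                    (\<lambda>\<theta>. \<Sum>v\<in>F. cmod (poly (rotation n r (poly_of_signs n v)) (cis \<theta>)) ^ 4)"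
    by (simp add: L4_pow4_def integral_sum[OF finF integrable_L4_pow4] sum_distrib_left)
  also have "\<dots> \<le> (1 / (2*pi)) * integral {0..2*pi} (\<lambda>\<theta>. C)"
    by (intro mult_left_mono integral_le integrable_sum finF integrable_L4_pow4 pointwise) auto
  also have "\<dots> = C" by simp
  finally show ?thesis
    by (simp add: C_def F_def Vset_eq_image card_image inj_on_poly_of_signs)
qed

lemma prob_V_L4_pow4_rotation_small:
  assumes "n > 1"
  shows "prob_V n (\<lambda>V. L4_pow4 (rotation n r V) < 288 * real (psi n) ^ 2 * ln (real n))
           \<ge> 1 - 1 / (96 * ln (real n))"
proof -
  define T where "T = 288 * real (psi n) ^ 2 * ln (real n)"
  define f where "f V = L4_pow4 (rotation n r V)" for V
  define K where "K = real (card (Vset n))"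
  define bad where "bad = real (card {V \<in> Vset n. T \<le> f V})"
  have fin: "finite (Vset n)"
    by (simp add: Vset_eq_image finite_sign_vectors finite_noncoprime_residues)
  have K: "K > 0" using card_Vset[OF assms] by (simp add: K_def)
  have ln: "ln (real n) > 0" using assms by simp
  have "T * bad \<le> sum f (Vset n)"
    unfolding bad_def using fin by (rule card_le_sum_threshold) (simp add: f_def L4_pow4_nonneg)
  also have "\<dots> \<le> 3 * real (psi n) ^ 2 * K"
    unfolding f_def K_def by (rule sum_L4_pow4_rotation_le[OF assms])
  finally have "3 * real (psi n) ^ 2 * (96 * ln (real n) * bad) \<le> 3 * real (psi n) ^ 2 * K"
    unfolding T_def by (simp add: mult_ac)
  then have "96 * ln (real n) * bad \<le> K"
    using psi_ge_one[OF assms] by (simp add: mult_le_cancel_left_pos mult_ac)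
  then have bad_le: "bad / K \<le> 1 / (96 * ln (real n))"
    using K ln by (simp add: divide_simps mult_ac)
  have "card {V \<in> Vset n. f V < T} + card {V \<in> Vset n. T \<le> f V} = card (Vset n)"
    using fin by (subst card_Un_disjoint[symmetric]) (auto intro: arg_cong[where f = card])
  then have "real (card {V \<in> Vset n. f V < T}) = K - bad"
    unfolding K_def bad_def by linarith
  then have "prob_V n (\<lambda>V. f V < T) = (K - bad) / K"
    unfolding prob_V_def K_def by simp
  also have "\<dots> = 1 - bad / K" using K by (simp add: diff_divide_distrib)
  finally show ?thesis using bad_le by (simp add: f_def T_def)
qed

lemma prob_V_le_one: "prob_V n P \<le> 1"
proof (cases "finite (Vset n)")
  case True
  then have "card {V \<in> Vset n. P V} \<le> card (Vset n)" by (intro card_mono) auto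
  then show ?thesis unfolding prob_V_def by (auto simp: divide_le_eq_1)
qed (simp add: prob_V_def)

theorem lemma15:
  fixes r :: real
  shows "\<forall>\<epsilon>>0. \<exists>N. \<forall>n::nat. n \<ge> N \<and> odd n \<and> squarefree n \<and> n > 1 \<longrightarrow>
           \<bar>prob_V n (\<lambda>V. L4_pow4 (rotation n r V) < 288 * (real (psi n))^2 * ln (real n)) - 1\<bar> < \<epsilon>"
proof (intro allI impI)
  fix \<epsilon> :: real assume "\<epsilon> > 0"
  have "((\<lambda>n. 1 / (96 * ln (real n))) \<longlongrightarrow> 0) sequentially"
    by (intro tendsto_divide_0[OF tendsto_const] filterlim_at_top_imp_at_infinity
        filterlim_tendsto_pos_mult_at_top[OF tendsto_const]
        filterlim_compose[OF ln_at_top filterlim_real_sequentially]) simp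
  then have "eventually (\<lambda>n. 1 / (96 * ln (real n)) < \<epsilon>) sequentially"
    using \<open>\<epsilon> > 0\<close> by (rule order_tendstoD(2))
  then obtain N where N: "\<forall>n\<ge>N. 1 / (96 * ln (real n)) < \<epsilon>"
    unfolding eventually_sequentially by blast
  show "\<exists>N. \<forall>n::nat. n \<ge> N \<and> odd n \<and> squarefree n \<and> n > 1 \<longrightarrow>
           \<bar>prob_V n (\<lambda>V. L4_pow4 (rotation n r V) < 288 * (real (psi n))^2 * ln (real n)) - 1\<bar> < \<epsilon>"
  proof (intro exI allI impI)
    fix n :: nat assume n: "n \<ge> N \<and> odd n \<and> squarefree n \<and> n > 1"
    let ?P = "prob_V n (\<lambda>V. L4_pow4 (rotation n r V) < 288 * (real (psi n))^2 * ln (real n))"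
    have "1 - 1 / (96 * ln (real n)) \<le> ?P" using n by (simp add: prob_V_L4_pow4_rotation_small)
    moreover have "1 / (96 * ln (real n)) < \<epsilon>" using N n by blast
    moreover have "?P \<le> 1" by (rule prob_V_le_one)
    ultimately show "\<bar>?P - 1\<bar> < \<epsilon>" by linarith
  qed
qed

end
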